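(* Let $A$ be the matrix described in the context. Diffusion occurs from a small seed if and only if the largest eigenvalue $\mu$ of $A$ (its Perron root) satisfies $\mu>1$.
   Context: There are $m\ge1$ types. $\Pi=(\pi_{ij})$ is a nonnegative row-stochastic $m\times m$ matrix ($\pi_{ij}$ is the probability that a meeting of a type-$i$ agent is with a type-$j$ agent) which is primitive (some power has all entries strictly positive). For each type $i$: $P_i$ is a degree distribution on the nonnegative integers; $w_i(d)>0$ are degree weights for $d$ with $P_i(d)>0$; $f_i(d,a)$, $g_i(d,a)$ ($0\le a\le d$) are the adoption and abandonment rates of a type-$i$, degree-$d$ agent meeting $a$ adopters, satisfying: $f_i(d,0)=0$; $f_i(d,a)$ nondecreasing in $a$; $f_i(d,1)>0$ for some $d$ with $P_i(d)>0$; $g_i(d,0)>0$; $g_i(d,a)$ nonincreasing in $a$. Let $x_i=\sum_dP_i(d)w_i(d)\,d\,\frac{f_i(d,1)}{g_i(d,0)}$, assumed finite; it is positive. $A$ is the $m\times m$ matrix with $A_{ij}=\pi_{ij}x_j$ (the linearization at zero of the steady-state map for the probabilities of meeting an adopter). Diffusion occurs from a small seed means: for every $\varepsilon>0$ there exists $v\in\mathbb{R}^m$ with $0<v_i<\varepsilon$ and $(Av)_i>v_i$ for all $i$. *)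

theory Defs
  imports "HOL-Analysis.Analysis"
begin

primrec matpow :: "real^'n^'n \<Rightarrow> nat \<Rightarrow> real^'n^'n" where
  "matpow M 0 = mat 1"
| "matpow M (Suc k) = M ** matpow M k"

definition primitive_matrix :: "real^'n^'n \<Rightarrow> bool" where
  "primitive_matrix M \<longleftrightarrow> (\<forall>i j. M $ i $ j \<ge> 0) \<and> (\<exists>k. \<forall>i j. matpow M k $ i $ j > 0)"

definition complex_eigenvalue :: "real^'n^'n \<Rightarrow> complex \<Rightarrow> bool" where
  "complex_eigenvalue M l \<longleftrightarrow>
     (\<exists>z::complex^'n. z \<noteq> 0 \<and> (\<chi> i j. complex_of_real (M $ i $ j)) *v z = l *s z)"

text \<open>The Perron root of a nonnegative matrix: its spectral radius, i.e. the largest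
  modulus of a (complex) eigenvalue; for a nonnegative primitive matrix this is the
  largest eigenvalue, which is real and positive.\<close>
definition perron_root :: "real^'n^'n \<Rightarrow> real" where
  "perron_root M = Max (cmod ` {l. complex_eigenvalue M l})"

definition xval :: "(nat \<Rightarrow> real) \<Rightarrow> (nat \<Rightarrow> real) \<Rightarrow> (nat \<Rightarrow> nat \<Rightarrow> real) \<Rightarrow> (nat \<Rightarrow> nat \<Rightarrow> real) \<Rightarrow> real" where
  "xval P w f g = (\<Sum>d. P d * w d * real d * f d 1 / g d 0)"

definition diffusion_small_seed :: "real^'n^'n \<Rightarrow> bool" where
  "diffusion_small_seed M \<longleftrightarrow>
     (\<forall>\<epsilon>>0. \<exists>v::real^'n. (\<forall>i. 0 < v $ i \<and> v $ i < \<epsilon>) \<and> (\<forall>i. (M *v v) $ i > v $ i))"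

end

theory Submission
  imports Defs
begin

text \<open>
  A primitive nonnegative matrix has a positive right and a positive left eigenvector for one
  and the same eigenvalue \<open>\<rho> > 0\<close>; the right one comes from Brouwer's fixed point theorem applied
  to \<open>v \<mapsto> A v / \<Sum>\<^sub>i (A v)\<^sub>i\<close> on the probability simplex. Pairing an arbitrary eigenvector, or a
  seed \<open>v\<close> with \<open>A v > v\<close>, against the positive left eigenvector \<open>y\<close> gives \<open>\<bar>l\<bar> \<le> \<rho>\<close> resp. \<open>\<rho> > 1\<close>,
  so \<open>\<rho>\<close> is the Perron root; conversely, small multiples of the right eigenvector are seeds when
  \<open>\<rho> > 1\<close>. The matrix \<open>A\<close> is \<open>\<Pi>\<close> with its columns scaled by the positive numbers \<open>x\<^sub>j\<close>, hence
  primitive together with \<open>\<Pi>\<close>.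
\<close>

lemma matrix_mult_component:
  "((M::'a::semiring_1^'n^'m) ** (N::'a^'p^'n)) $ i $ j = (\<Sum>l\<in>UNIV. M$i$l * N$l$j)"
  by (simp add: matrix_matrix_mult_def)

lemma matrix_vector_mult_component: "((M::'a::semiring_1^'n^'m) *v x) $ i = (\<Sum>j\<in>UNIV. M$i$j * x$j)"
  by (simp add: matrix_vector_mult_def)

lemma matpow_Suc_right: "matpow M (Suc k) = matpow M k ** M"
proof (induction k)
  case 0
  then show ?case by (simp add: matrix_mul_lid matrix_mul_rid)
next
  case (Suc k)
  then have "matpow M (Suc (Suc k)) = M ** (matpow M k ** M)" by simp
  also have "\<dots> = matpow M (Suc k) ** M" by (simp add: matrix_mul_assoc)
  finally show ?case .
qed

lemma matpow_transpose: "matpow (transpose M) k = transpose (matpow M k)"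
proof (induction k)
  case 0
  then show ?case by (simp add: transpose_mat)
next
  case (Suc k)
  then have "matpow (transpose M) (Suc k) = transpose M ** transpose (matpow M k)" by simp
  also have "\<dots> = transpose (matpow M k ** M)" by (simp add: matrix_transpose_mul)
  also have "\<dots> = transpose (matpow M (Suc k))" by (simp only: matpow_Suc_right)
  finally show ?case .
qed

lemma matpow_nonneg: "\<forall>i j. (M::real^'n^'n) $ i $ j \<ge> 0 \<Longrightarrow> matpow M k $ i $ j \<ge> 0"
  by (induction k arbitrary: i j) (simp_all add: mat_def matrix_mult_component sum_nonneg)

lemma matpow_scaled_le:
  fixes M N :: "real^'n^'n"
  assumes M_nonneg: "\<forall>i j. M $ i $ j \<ge> 0" and "c \<ge> 0" and le: "\<forall>i j. c * M $ i $ j \<le> N $ i $ j"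
  shows "c ^ k * matpow M k $ i $ j \<le> matpow N k $ i $ j"
proof (induction k arbitrary: i j)
  case 0
  then show ?case by (simp add: mat_def)
next
  case (Suc k)
  have "c ^ Suc k * matpow M (Suc k) $ i $ j = (\<Sum>l\<in>UNIV. (c * M$i$l) * (c^k * matpow M k $ l $ j))"
    by (simp add: matrix_mult_component sum_distrib_left algebra_simps)
  also have "\<dots> \<le> (\<Sum>l\<in>UNIV. N$i$l * matpow N k $ l $ j)"
  proof (rule sum_mono)
    fix l
    have "0 \<le> c * M$i$l" "0 \<le> c^k * matpow M k $ l $ j"
      using assms matpow_nonneg[OF M_nonneg] by simp_all
    then show "(c * M$i$l) * (c^k * matpow M k $ l $ j) \<le> N$i$l * matpow N k $ l $ j"
      using le Suc.IH by (intro mult_mono) (auto intro: order_trans)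
  qed
  also have "\<dots> = matpow N (Suc k) $ i $ j" by (simp add: matrix_mult_component)
  finally show ?case .
qed

lemma matpow_mult_eigenvector:
  "(M::real^'n^'n) *v x = s *\<^sub>R x \<Longrightarrow> matpow M k *v x = (s ^ k) *\<^sub>R x"
  by (induction k) (simp_all flip: matrix_vector_mul_assoc add: matrix_vector_mult_scaleR)

lemma matpow_Suc_pos:
  fixes M :: "real^'n^'n"
  assumes nonneg: "\<forall>i j. M $ i $ j \<ge> 0" and row: "\<forall>i. \<exists>j. M $ i $ j > 0"
    and pos: "\<forall>i j. matpow M k $ i $ j > 0"
  shows "matpow M (Suc k) $ i $ j > 0"
proof -
  obtain l where "M $ i $ l > 0" using row by blast
  then show ?thesis
    unfolding matpow.simps matrix_mult_component using pos nonneg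
    by (intro sum_pos2[where i=l]) (auto intro!: mult_nonneg_nonneg simp: less_imp_le)
qed

lemma matpow_column_scaled_pos:
  fixes M :: "real^'n^'n"
  assumes nonneg: "\<forall>i j. M $ i $ j \<ge> 0" and c_pos: "\<forall>j. c j > 0"
    and pos: "\<forall>i j. matpow M k $ i $ j > 0"
  shows "matpow (\<chi> i j. M $ i $ j * c j) k $ i $ j > 0"
proof -
  define \<delta> where "\<delta> = Min (range c)"
  have "\<delta> > 0" unfolding \<delta>_def using c_pos by (subst Min_gr_iff) auto
  have "\<delta> * M $ i $ j \<le> M $ i $ j * c j" for i j
  proof -
    have "\<delta> \<le> c j" unfolding \<delta>_def by (rule Min_le) auto
    then show ?thesis using nonneg by (simp add: mult_right_mono mult.commute)
  qed
  then have "\<delta> ^ k * matpow M k $ i $ j \<le> matpow (\<chi> i j. M $ i $ j * c j) k $ i $ j"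
    using nonneg \<open>\<delta> > 0\<close> by (intro matpow_scaled_le) auto
  moreover have "0 < \<delta> ^ k * matpow M k $ i $ j" using \<open>\<delta> > 0\<close> pos by simp
  ultimately show ?thesis by linarith
qed

definition prob_simplex :: "(real^'n) set" where
  "prob_simplex = {x. (\<forall>i. 0 \<le> x $ i) \<and> (\<Sum>i\<in>UNIV. x $ i) = 1}"

lemma compact_prob_simplex: "compact prob_simplex"
proof (subst compact_eq_bounded_closed, intro conjI)
  have "norm x \<le> 1" if "x \<in> prob_simplex" for x :: "real^'n"
  proof -
    have "norm x \<le> (\<Sum>i\<in>UNIV. \<bar>x $ i\<bar>)" by (rule norm_le_l1_cart)
    also have "\<dots> = 1" using that unfolding prob_simplex_def by simp
    finally show ?thesis .
  qed
  then show "bounded (prob_simplex :: (real^'n) set)" unfolding bounded_iff by blast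
  have "prob_simplex = (\<Inter>i. {x::real^'n. 0 \<le> x $ i}) \<inter> {x. (\<Sum>i\<in>UNIV. x $ i) = 1}"
    unfolding prob_simplex_def by auto
  moreover have "closed {x::real^'n. (\<Sum>i\<in>UNIV. x $ i) = 1}"
    by (intro closed_Collect_eq continuous_intros)
  moreover have "closed {x::real^'n. 0 \<le> x $ i}" for i
    by (intro closed_Collect_le continuous_intros)
  ultimately show "closed (prob_simplex :: (real^'n) set)" by (metis closed_INT closed_Int)
qed

lemma convex_prob_simplex: "convex prob_simplex"
  unfolding convex_def prob_simplex_def by (auto simp: sum.distrib sum_distrib_left[symmetric])

lemma prob_simplex_nonempty: "prob_simplex \<noteq> {}"
proof -
  have "(\<chi> i. 1 / real CARD('n)) \<in> (prob_simplex :: (real^'n) set)"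
    unfolding prob_simplex_def by simp
  then show ?thesis by blast
qed

lemma prob_simplex_pos_component:
  assumes "x \<in> prob_simplex"
  obtains j where "x $ j > 0"
proof -
  have nonneg: "\<forall>j. 0 \<le> x $ j" and "(\<Sum>j\<in>UNIV. x $ j) = 1"
    using assms unfolding prob_simplex_def by auto
  then obtain j where "x $ j \<noteq> 0" by (metis (no_types) sum.neutral zero_neq_one)
  then show ?thesis using that nonneg less_eq_real_def by metis
qed

lemma sum_matrix_vector_mult:
  "(\<Sum>i\<in>UNIV. ((B::real^'n^'m) *v x) $ i) = (\<Sum>j\<in>UNIV. (\<Sum>i\<in>UNIV. B $ i $ j) * x $ j)"
  unfolding matrix_vector_mult_component
  by (subst sum.swap) (simp add: sum_distrib_right)

lemma nonneg_eigenvector_in_prob_simplex: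
  fixes B :: "real^'n^'n"
  assumes nonneg: "\<forall>i j. B $ i $ j \<ge> 0" and col: "\<forall>j. (\<Sum>i\<in>UNIV. B $ i $ j) > 0"
  obtains x s where "x \<in> prob_simplex" "s > 0" "B *v x = s *\<^sub>R x"
proof -
  define \<sigma> where "\<sigma> x = (\<Sum>i\<in>UNIV. (B *v x) $ i)" for x
  have \<sigma>_pos: "\<sigma> x > 0" if x: "x \<in> prob_simplex" for x
  proof -
    obtain j where "x $ j > 0" using prob_simplex_pos_component[OF x] by blast
    then show ?thesis
      unfolding \<sigma>_def sum_matrix_vector_mult using x col unfolding prob_simplex_def
      by (intro sum_pos2[where i=j]) (auto intro: mult_nonneg_nonneg less_imp_le)
  qed
  define F where "F x = (1 / \<sigma> x) *\<^sub>R (B *v x)" for x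
  have "continuous_on prob_simplex F"
  proof -
    have lin: "continuous_on prob_simplex (\<lambda>x. B *v x)"
      by (intro linear_continuous_on linear_conv_bounded_linear[THEN iffD1] matrix_vector_mul_linear)
    then show ?thesis unfolding F_def \<sigma>_def
      using \<sigma>_pos unfolding \<sigma>_def by (intro continuous_intros lin) (metis less_irrefl)
  qed
  moreover have "F \<in> prob_simplex \<rightarrow> prob_simplex"
  proof
    fix x :: "real^'n" assume x: "x \<in> prob_simplex"
    have "(B *v x) $ i \<ge> 0" for i
      using nonneg x unfolding prob_simplex_def by (simp add: matrix_vector_mult_component sum_nonneg)
    then show "F x \<in> prob_simplex"
      unfolding prob_simplex_def F_def using \<sigma>_pos[OF x]
      by (simp add: \<sigma>_def sum_divide_distrib[symmetric])
  qed
  ultimately obtain x where x: "x \<in> prob_simplex" and "F x = x"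
    using brouwer[OF compact_prob_simplex convex_prob_simplex prob_simplex_nonempty] by blast
  then have "B *v x = \<sigma> x *\<^sub>R x"
    using \<sigma>_pos[OF x] unfolding F_def by (metis divide_inverse_commute divide_self_if
        less_irrefl mult.commute scaleR_one scaleR_scaleR)
  then show ?thesis using that x \<sigma>_pos[OF x] by blast
qed

lemma positive_eigenvector_of_primitive:
  fixes B :: "real^'n^'n"
  assumes nonneg: "\<forall>i j. B $ i $ j \<ge> 0" and pos: "\<forall>i j. matpow B (Suc k) $ i $ j > 0"
  obtains x s where "\<forall>i. x $ i > 0" "s > 0" "B *v x = s *\<^sub>R x"
proof -
  have "(\<Sum>i\<in>UNIV. B $ i $ j) > 0" for j
  proof -
    fix i :: 'n
    have "0 < (\<Sum>l\<in>UNIV. matpow B k $ i $ l * B $ l $ j)"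
      using pos by (simp only: matpow_Suc_right matrix_mult_component)
    then obtain l where "matpow B k $ i $ l * B $ l $ j \<noteq> 0"
      by (metis (no_types, lifting) less_irrefl sum.neutral)
    then have "B $ l $ j > 0" using nonneg by (metis less_eq_real_def mult_zero_right)
    then show ?thesis using nonneg by (meson UNIV_I finite sum_pos2)
  qed
  then obtain x s where x: "x \<in> prob_simplex" and "s > 0" and eig: "B *v x = s *\<^sub>R x"
    using nonneg nonneg_eigenvector_in_prob_simplex by blast
  obtain j where "x $ j > 0" using prob_simplex_pos_component[OF x] by blast
  have "x $ i > 0" for i
  proof -
    have "0 < (matpow B (Suc k) *v x) $ i"
      unfolding matrix_vector_mult_component using x pos \<open>x $ j > 0\<close> unfolding prob_simplex_def
      by (intro sum_pos2[where i=j]) (auto intro: mult_nonneg_nonneg less_imp_le)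
    also have "\<dots> = s ^ Suc k * x $ i" by (subst matpow_mult_eigenvector[OF eig]) simp
    finally show ?thesis using \<open>s > 0\<close> by (metis zero_less_mult_pos zero_less_power)
  qed
  then show ?thesis using that \<open>s > 0\<close> eig by blast
qed

lemma eigenvectors_independent:
  fixes C :: "complex^'n^'n" and e :: "complex \<Rightarrow> complex^'n"
  assumes "finite L" and "\<forall>l\<in>L. e l \<noteq> 0 \<and> C *v e l = l *s e l"
    and "(\<Sum>l\<in>L. c l *s e l) = 0"
  shows "\<forall>l\<in>L. c l = 0"
  using assms
proof (induction L arbitrary: c rule: finite_induct)
  case empty
  then show ?case by simp
next
  case (insert a F)
  have s0: "c a *s e a + (\<Sum>l\<in>F. c l *s e l) = 0" using insert by simp
  then have "C *v (c a *s e a + (\<Sum>l\<in>F. c l *s e l)) = 0" by simp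
  then have s1: "(c a * a) *s e a + (\<Sum>l\<in>F. (c l * l) *s e l) = 0"
    using insert.prems by (simp add: vec.add vec.sum vec.scale vector_smult_assoc mult.commute)
  have "(\<Sum>l\<in>F. (c l * (l - a)) *s e l) =
        ((c a * a) *s e a + (\<Sum>l\<in>F. (c l * l) *s e l)) - a *s (c a *s e a + (\<Sum>l\<in>F. c l *s e l))"
    by (simp add: algebra_simps vector_ssub_ldistrib vector_sadd_rdistrib vec.scale_sum_right
        sum_subtractf vector_smult_assoc vector_sub_rdistrib vector_add_ldistrib)
  also have "\<dots> = 0" using s0 s1 by simp
  finally have "\<forall>l\<in>F. c l * (l - a) = 0" using insert.IH[of "\<lambda>l. c l * (l - a)"] insert.prems by blast
  then have cF: "\<forall>l\<in>F. c l = 0" using insert.hyps by auto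
  then have "c a *s e a = 0" using s0 by simp
  then show ?case using cF insert.prems by (simp add: vec.scale_eq_0_iff)
qed

lemma card_complex_eigenvalues_le:
  fixes M :: "real^'n^'n"
  assumes fin: "finite L" and sub: "L \<subseteq> {l. complex_eigenvalue M l}"
  shows "card L \<le> CARD('n)"
proof -
  define C where "C = (\<chi> i j. complex_of_real (M $ i $ j))"
  define e where "e l = (SOME z. z \<noteq> 0 \<and> C *v z = l *s z)" for l
  have ev: "\<forall>l\<in>L. e l \<noteq> 0 \<and> C *v e l = l *s e l"
  proof
    fix l assume "l \<in> L"
    then have "\<exists>z. z \<noteq> 0 \<and> C *v z = l *s z" using sub unfolding complex_eigenvalue_def C_def by auto
    then show "e l \<noteq> 0 \<and> C *v e l = l *s e l" unfolding e_def by (rule someI_ex)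
  qed
  have inj: "inj_on e L"
  proof
    fix a b assume ab: "a \<in> L" "b \<in> L" "e a = e b"
    then have "(a - b) *s e a = 0" using ev by (metis vector_sub_rdistrib right_minus_eq)
    then show "a = b" using ev ab by (simp add: vec.scale_eq_0_iff)
  qed
  have "vec.independent (e ` L)"
  proof (rule vec.independent_if_scalars_zero)
    show "finite (e ` L)" using fin by simp
    fix g v assume s: "(\<Sum>x\<in>e ` L. g x *s x) = 0" and v: "v \<in> e ` L"
    have "(\<Sum>l\<in>L. g (e l) *s e l) = 0" using s by (simp add: sum.reindex[OF inj])
    then have "\<forall>l\<in>L. g (e l) = 0" by (rule eigenvectors_independent[OF fin ev])
    then show "g v = 0" using v by auto
  qed
  then have "card (e ` L) \<le> vec.dim (e ` L)" using vec.independent_bound_general by blast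
  also have "\<dots> \<le> CARD('n)" by (rule dim_subset_UNIV_cart_gen)
  finally show ?thesis using card_image[OF inj] by simp
qed

lemma finite_complex_eigenvalues: "finite {l. complex_eigenvalue (M::real^'n^'n) l}"
proof (rule ccontr)
  assume "infinite {l. complex_eigenvalue M l}"
  then obtain L where "L \<subseteq> {l. complex_eigenvalue M l}" "finite L" "card L = Suc (CARD('n))"
    using infinite_arbitrarily_large by blast
  then show False using card_complex_eigenvalues_le[of L M] by simp
qed

lemma inner_left_eigenvector:
  fixes A :: "real^'n^'n"
  assumes "y v* A = \<mu> *\<^sub>R y"
  shows "inner y (A *v v) = \<mu> * inner y v"
  by (simp flip: dot_lmul_matrix add: assms)

lemma inner_pos_of_pos_nonneg:
  fixes y v :: "real^'n"
  assumes "\<forall>i. y $ i > 0" and "\<forall>i. v $ i \<ge> 0" and "v \<noteq> 0"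
  shows "inner y v > 0"
proof -
  obtain j where "v $ j \<noteq> 0" using \<open>v \<noteq> 0\<close> by (auto simp: vec_eq_iff)
  then show ?thesis
    unfolding inner_vec_def using assms
    by (intro sum_pos2[where i=j]) (auto intro: mult_nonneg_nonneg less_imp_le simp: order.strict_iff_order)
qed

lemma left_right_eigenvalue_eq:
  fixes A :: "real^'n^'n"
  assumes "\<forall>i. x $ i > 0" "A *v x = \<rho> *\<^sub>R x" "\<forall>i. y $ i > 0" "y v* A = \<mu> *\<^sub>R y"
  shows "\<mu> = \<rho>"
proof -
  have "\<mu> * inner y x = inner y (A *v x)" by (simp add: inner_left_eigenvector[OF assms(4)])
  also have "\<dots> = \<rho> * inner y x" by (simp add: assms(2))
  finally have "\<mu> * inner y x = \<rho> * inner y x" .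
  moreover have "inner y x > 0"
    using assms by (intro inner_pos_of_pos_nonneg) (auto intro: less_imp_le dest: spec[of _ undefined])
  ultimately show ?thesis by simp
qed

text \<open>Taking moduli turns a complex eigenvector \<open>z\<close> into the subinvariant vector \<open>\<bar>z\<bar>\<close>:
  \<open>\<bar>l\<bar> \<bar>z\<bar> \<le> A \<bar>z\<bar>\<close>; pairing with \<open>y\<close> bounds \<open>\<bar>l\<bar>\<close> by \<open>\<mu>\<close>.\<close>
lemma cmod_complex_eigenvalue_le:
  fixes A :: "real^'n^'n"
  assumes nonneg: "\<forall>i j. A $ i $ j \<ge> 0" and y: "\<forall>i. y $ i > 0" and left: "y v* A = \<mu> *\<^sub>R y"
    and "complex_eigenvalue A l"
  shows "cmod l \<le> \<mu>"
proof -
  obtain z :: "complex^'n" where "z \<noteq> 0" and z: "(\<chi> i j. complex_of_real (A $ i $ j)) *v z = l *s z"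
    using \<open>complex_eigenvalue A l\<close> unfolding complex_eigenvalue_def by blast
  define u :: "real^'n" where "u = (\<chi> i. cmod (z $ i))"
  have "cmod l * u $ i \<le> (A *v u) $ i" for i
  proof -
    have "cmod l * u $ i = cmod (\<Sum>j\<in>UNIV. complex_of_real (A $ i $ j) * z $ j)"
      using arg_cong[OF z, of "\<lambda>v. v $ i"]
      by (simp add: u_def matrix_vector_mult_component norm_mult)
    also have "\<dots> \<le> (\<Sum>j\<in>UNIV. cmod (complex_of_real (A $ i $ j) * z $ j))"
      by (rule norm_sum)
    also have "\<dots> = (\<Sum>j\<in>UNIV. A $ i $ j * u $ j)"
      using nonneg by (simp add: u_def norm_mult)
    finally show ?thesis by (simp add: matrix_vector_mult_component)
  qed
  then have "inner y (cmod l *\<^sub>R u) \<le> inner y (A *v u)"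
    unfolding inner_vec_def using y by (intro sum_mono) (simp add: less_imp_le mult_left_mono)
  then have "cmod l * inner y u \<le> \<mu> * inner y u"
    by (simp add: inner_left_eigenvector[OF left])
  moreover have "inner y u > 0"
    using y \<open>z \<noteq> 0\<close> by (intro inner_pos_of_pos_nonneg) (auto simp: u_def vec_eq_iff)
  ultimately show ?thesis by simp
qed

lemma complex_eigenvalue_of_real:
  fixes A :: "real^'n^'n"
  assumes "x \<noteq> 0" and "A *v x = \<rho> *\<^sub>R x"
  shows "complex_eigenvalue A (complex_of_real \<rho>)"
  unfolding complex_eigenvalue_def
proof (intro exI conjI)
  show "(\<chi> i. complex_of_real (x $ i)) \<noteq> 0" using \<open>x \<noteq> 0\<close> by (auto simp: vec_eq_iff)
  have "(\<Sum>j\<in>UNIV. A $ i $ j * x $ j) = \<rho> * x $ i" for i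
    using arg_cong[OF assms(2), of "\<lambda>v. v $ i"] by (simp add: matrix_vector_mult_component)
  then show "(\<chi> i j. complex_of_real (A $ i $ j)) *v (\<chi> i. complex_of_real (x $ i)) =
      complex_of_real \<rho> *s (\<chi> i. complex_of_real (x $ i))"
    by (simp add: vec_eq_iff matrix_vector_mult_component flip: of_real_mult of_real_sum)
qed

lemma perron_root_eqI:
  fixes A :: "real^'n^'n"
  assumes nonneg: "\<forall>i j. A $ i $ j \<ge> 0"
    and x: "\<forall>i. x $ i > 0" "A *v x = \<rho> *\<^sub>R x" and y: "\<forall>i. y $ i > 0" "y v* A = \<rho> *\<^sub>R y"
  shows "perron_root A = \<rho>"
  unfolding perron_root_def
proof (rule Max_eqI)
  show "finite (cmod ` {l. complex_eigenvalue A l})"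
    using finite_complex_eigenvalues by (rule finite_imageI)
  show "u \<le> \<rho>" if "u \<in> cmod ` {l. complex_eigenvalue A l}" for u
    using that cmod_complex_eigenvalue_le[OF nonneg y] by auto
  have "x \<noteq> 0" using x(1) by (metis less_irrefl zero_index)
  then have "complex_eigenvalue A (complex_of_real \<rho>)"
    using x by (intro complex_eigenvalue_of_real)
  moreover have "\<rho> \<ge> 0"
  proof -
    fix i
    have "0 \<le> (A *v x) $ i"
      unfolding matrix_vector_mult_component using nonneg x(1)
      by (intro sum_nonneg mult_nonneg_nonneg) (auto intro: less_imp_le)
    then have "0 \<le> \<rho> * x $ i" by (simp add: x(2))
    then show ?thesis using x(1)[rule_format, of i] by (simp add: zero_le_mult_iff)
  qed
  ultimately show "\<rho> \<in> cmod ` {l. complex_eigenvalue A l}" by force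
qed

lemma perron_frobenius:
  fixes A :: "real^'n^'n"
  assumes nonneg: "\<forall>i j. A $ i $ j \<ge> 0" and pos: "\<forall>i j. matpow A (Suc k) $ i $ j > 0"
  obtains x y where "\<forall>i. x $ i > 0" "A *v x = perron_root A *\<^sub>R x"
    "\<forall>i. y $ i > 0" "y v* A = perron_root A *\<^sub>R y"
proof -
  obtain x \<rho> where x: "\<forall>i. x $ i > 0" "A *v x = \<rho> *\<^sub>R x"
    using positive_eigenvector_of_primitive[OF nonneg pos] by blast
  have "\<forall>i j. transpose A $ i $ j \<ge> 0" using nonneg by (simp add: transpose_def)
  moreover have "\<forall>i j. matpow (transpose A) (Suc k) $ i $ j > 0"
    using pos by (simp only: matpow_transpose) (simp add: transpose_def)
  ultimately obtain y \<mu> where y: "\<forall>i. y $ i > 0" "y v* A = \<mu> *\<^sub>R y"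
    using positive_eigenvector_of_primitive by (metis transpose_matrix_vector)
  have "\<mu> = \<rho>" using left_right_eigenvalue_eq[OF x y] .
  then have "perron_root A = \<rho>" using perron_root_eqI[OF nonneg x] y by simp
  then show ?thesis using that x y \<open>\<mu> = \<rho>\<close> by simp
qed

lemma diffusion_small_seed_iff_eigenvalue_gt_1:
  fixes A :: "real^'n^'n"
  assumes x: "\<forall>i. x $ i > 0" "A *v x = \<rho> *\<^sub>R x" and y: "\<forall>i. y $ i > 0" "y v* A = \<rho> *\<^sub>R y"
  shows "diffusion_small_seed A \<longleftrightarrow> \<rho> > 1"
proof
  assume "diffusion_small_seed A"
  then obtain v :: "real^'n" where v: "\<forall>i. 0 < v $ i" and Av: "\<forall>i. v $ i < (A *v v) $ i"
    unfolding diffusion_small_seed_def by (meson zero_less_one)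
  have "inner y v < inner y (A *v v)"
    unfolding inner_vec_def using y Av by (intro sum_strict_mono) auto
  then have "1 * inner y v < \<rho> * inner y v" by (simp add: inner_left_eigenvector[OF y(2)])
  moreover have "inner y v > 0"
    using y v by (intro inner_pos_of_pos_nonneg) (auto intro: less_imp_le dest: spec[of _ undefined])
  ultimately show "\<rho> > 1" by (simp add: mult_less_cancel_right)
next
  assume "\<rho> > 1"
  show "diffusion_small_seed A" unfolding diffusion_small_seed_def
  proof (intro allI impI)
    fix \<epsilon> :: real assume "\<epsilon> > 0"
    define X where "X = (\<Sum>i\<in>UNIV. x $ i)"
    have x_le: "x $ i \<le> X" for i
      unfolding X_def using x by (intro member_le_sum) (auto intro: less_imp_le)
    then have "X > 0" using x by (meson order.strict_trans2)
    define v where "v = (\<epsilon> / (2 * X)) *\<^sub>R x"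
    have "0 < v $ i \<and> v $ i < \<epsilon> \<and> v $ i < (A *v v) $ i" for i
    proof -
      have "0 < v $ i" using x \<open>\<epsilon> > 0\<close> \<open>X > 0\<close> by (simp add: v_def)
      have "v $ i = (\<epsilon> / (2 * X)) * x $ i" by (simp add: v_def)
      also have "\<dots> \<le> (\<epsilon> / (2 * X)) * X"
        using x_le[of i] \<open>\<epsilon> > 0\<close> \<open>X > 0\<close> by (intro mult_left_mono) auto
      finally have "v $ i \<le> \<epsilon> / 2" using \<open>X > 0\<close> by simp
      moreover have "(A *v v) $ i = \<rho> * v $ i"
        unfolding v_def by (simp add: matrix_vector_mult_scaleR x(2))
      ultimately show ?thesis
        using \<open>0 < v $ i\<close> \<open>\<epsilon> > 0\<close> mult_strict_right_mono[OF \<open>\<rho> > 1\<close> \<open>0 < v $ i\<close>] by simp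
    qed
    then show "\<exists>v::real^'n. (\<forall>i. 0 < v $ i \<and> v $ i < \<epsilon>) \<and> (\<forall>i. v $ i < (A *v v) $ i)"
      by blast
  qed
qed

lemma xval_pos:
  assumes P_nonneg: "\<forall>d. P d \<ge> 0" and w_pos: "\<forall>d. P d > 0 \<longrightarrow> w d > 0"
    and f_nonneg: "\<forall>d. 1 \<le> d \<longrightarrow> f d 1 \<ge> 0" and g_pos: "\<forall>d. g d 0 > 0"
    and f_one: "\<exists>d. P d > 0 \<and> 1 \<le> d \<and> f d 1 > 0"
    and summable: "summable (\<lambda>d. P d * w d * real d * f d 1 / g d 0)"
  shows "xval P w f g > 0"
proof -
  have "0 \<le> P d * w d * real d * f d 1 / g d 0" for d
  proof (cases "P d > 0 \<and> 1 \<le> d")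
    case True
    then show ?thesis using w_pos f_nonneg g_pos
      by (intro divide_nonneg_pos mult_nonneg_nonneg) (auto intro: less_imp_le)
  next
    case False
    then have "P d = 0 \<or> d = 0" using P_nonneg by (metis less_eq_real_def less_one not_le)
    then show ?thesis by auto
  qed
  moreover obtain d where "P d > 0" "1 \<le> d" "f d 1 > 0" using f_one by blast
  then have "0 < P d * w d * real d * f d 1 / g d 0" using w_pos g_pos by simp
  ultimately show ?thesis unfolding xval_def using summable by (intro suminf_pos2[where i=d]) auto
qed

theorem theorem3:
  fixes Pi :: "real^'m^'m"
    and P :: "'m \<Rightarrow> nat \<Rightarrow> real"
    and w :: "'m \<Rightarrow> nat \<Rightarrow> real"
    and f g :: "'m \<Rightarrow> nat \<Rightarrow> nat \<Rightarrow> real"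
    and A :: "real^'m^'m"
  assumes Pi_nonneg: "\<forall>i j. Pi $ i $ j \<ge> 0"
    and Pi_stoch: "\<forall>i. (\<Sum>j\<in>UNIV. Pi $ i $ j) = 1"
    and Pi_prim: "primitive_matrix Pi"
    and P_nonneg: "\<forall>i d. P i d \<ge> 0"
    and P_dist: "\<forall>i. P i sums 1"
    and w_pos: "\<forall>i d. P i d > 0 \<longrightarrow> w i d > 0"
    and f_nonneg: "\<forall>i d a. a \<le> d \<longrightarrow> f i d a \<ge> 0"
    and g_nonneg: "\<forall>i d a. a \<le> d \<longrightarrow> g i d a \<ge> 0"
    and f_zero: "\<forall>i d. f i d 0 = 0"
    and f_mono: "\<forall>i d a b. a \<le> b \<longrightarrow> b \<le> d \<longrightarrow> f i d a \<le> f i d b"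
    and f_one: "\<forall>i. \<exists>d. P i d > 0 \<and> 1 \<le> d \<and> f i d 1 > 0"
    and g_zero: "\<forall>i d. g i d 0 > 0"
    and g_mono: "\<forall>i d a b. a \<le> b \<longrightarrow> b \<le> d \<longrightarrow> g i d b \<le> g i d a"
    and x_fin: "\<forall>i. summable (\<lambda>d. P i d * w i d * real d * f i d 1 / g i d 0)"
    and A_def: "A = (\<chi> i j. Pi $ i $ j * xval (P j) (w j) (f j) (g j))"
  shows "diffusion_small_seed A \<longleftrightarrow> perron_root A > 1"
proof -
  have x_pos: "\<forall>j. xval (P j) (w j) (f j) (g j) > 0"
  proof
    fix j
    show "xval (P j) (w j) (f j) (g j) > 0"
      using P_nonneg w_pos f_nonneg g_zero f_one x_fin by (intro xval_pos) simp_all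
  qed
  then have A_nonneg: "\<forall>i j. A $ i $ j \<ge> 0"
    using Pi_nonneg by (simp add: A_def less_imp_le)
  obtain k where "\<forall>i j. matpow Pi k $ i $ j > 0"
    using Pi_prim unfolding primitive_matrix_def by blast
  moreover have "\<forall>i. \<exists>j. Pi $ i $ j > 0"
    using Pi_stoch Pi_nonneg by (metis less_eq_real_def sum.neutral zero_neq_one)
  ultimately have "\<forall>i j. matpow Pi (Suc k) $ i $ j > 0"
    using Pi_nonneg matpow_Suc_pos by blast
  then have "\<forall>i j. matpow A (Suc k) $ i $ j > 0"
    unfolding A_def using matpow_column_scaled_pos[OF Pi_nonneg x_pos] by blast
  then obtain x y where "\<forall>i. x $ i > 0" "A *v x = perron_root A *\<^sub>R x"
      "\<forall>i. y $ i > 0" "y v* A = perron_root A *\<^sub>R y"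
    using A_nonneg perron_frobenius by blast
  then show ?thesis by (rule diffusion_small_seed_iff_eigenvalue_gt_1)
qed

end
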